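(* Let $x,y$ be non-commuting indeterminates and let $C=xyx^{-1}y^{-1}$. Let $(R_n)_{n\in\mathbb Z}$ be the unique solution of $$R_{n+1}CR_{n-1}=R_n^2+1\qquad(n\in\mathbb Z)$$ with $R_0=yxy^{-1}$ and $R_1=y$. Then for every $n\in\mathbb Z$, $R_n$ is a Laurent polynomial in $x,y$ whose coefficients all lie in $\{0,1\}$. Moreover, let $n\ge 0$ and set $$y_1=R_1R_0^{-1}=y^2x^{-1}y^{-1},\qquad y_2=R_1^{-1}R_0^{-1}=x^{-1}y^{-1},\qquad y_3=R_1^{-1}R_0=xy^{-1}.$$ Consider paths on $\{0,1,2,3\}$ with $2n$ steps of the form $i\to i\pm1$ that start and end at $0$. The weight of such a path is the product, from left to right in the order the steps are taken, of $1$ for each step $i\to i+1$ and $y_i$ for each step $i\to i-1$. Then each Laurent monomial appearing in $R_nR_0^{-1}$ is the weight of exactly one such path.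
   Context: Work in the free skew field (non-commutative rational functions) over $\mathbb C$ generated by $x,y$. A Laurent polynomial in $x,y$ is a $\mathbb Z$-linear combination of words (Laurent monomials) in $x^{\pm1},y^{\pm1}$. Its coefficients are those of its expansion in reduced words. *)

theory Defs
  imports Main
begin

(* Free group F(x,y): letters are (generator, sign); generator False = x, True = y;
   sign True = exponent +1, False = exponent -1.  Group elements = reduced words. *)
type_synonym letter = "bool \<times> bool"
type_synonym word = "letter list"
(* Laurent polynomials = Z-valued finitely supported functions on reduced words *)
type_synonym lpoly = "word \<Rightarrow> int"

definition inv_letter :: "letter \<Rightarrow> letter" where
  "inv_letter a = (fst a, \<not> snd a)"

definition reduced :: "word \<Rightarrow> bool" where
  "reduced w \<longleftrightarrow> (\<forall>i. Suc i < length w \<longrightarrow> w ! Suc i \<noteq> inv_letter (w ! i))"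

fun red_cons :: "letter \<Rightarrow> word \<Rightarrow> word" where
  "red_cons a [] = [a]"
| "red_cons a (b # ws) = (if b = inv_letter a then ws else a # b # ws)"

definition reduce :: "word \<Rightarrow> word" where
  "reduce w = foldr red_cons w []"

definition gmul :: "word \<Rightarrow> word \<Rightarrow> word" where
  "gmul u v = reduce (u @ v)"

definition ginv :: "word \<Rightarrow> word" where
  "ginv w = rev (map inv_letter w)"

definition is_laurent :: "lpoly \<Rightarrow> bool" where
  "is_laurent p \<longleftrightarrow> finite {w. p w \<noteq> 0} \<and> (\<forall>w. p w \<noteq> 0 \<longrightarrow> reduced w)"

definition lmono :: "word \<Rightarrow> lpoly" where
  "lmono w = (\<lambda>v. if v = reduce w then 1 else 0)"

definition ladd :: "lpoly \<Rightarrow> lpoly \<Rightarrow> lpoly" where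
  "ladd p q = (\<lambda>w. p w + q w)"

definition lmul :: "lpoly \<Rightarrow> lpoly \<Rightarrow> lpoly" where
  "lmul p q = (\<lambda>w. \<Sum>(u, v) \<in> {u. p u \<noteq> 0} \<times> {v. q v \<noteq> 0}.
                    if gmul u v = w then p u * q v else 0)"

definition lone :: lpoly where
  "lone = lmono []"

definition xw :: word where "xw = [(False, True)]"
definition yw :: word where "yw = [(True, True)]"

definition C_word :: word where
  "C_word = gmul (gmul xw yw) (gmul (ginv xw) (ginv yw))"

definition R0_word :: word where
  "R0_word = gmul (gmul yw xw) (ginv yw)"

definition y1w :: word where "y1w = gmul yw (ginv R0_word)"
definition y2w :: word where "y2w = gmul (ginv yw) (ginv R0_word)"
definition y3w :: word where "y3w = gmul (ginv yw) R0_word"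

definition paths :: "nat \<Rightarrow> nat list set" where
  "paths n = {s. length s = 2 * n + 1 \<and> hd s = 0 \<and> last s = 0 \<and> set s \<subseteq> {0..3} \<and>
      (\<forall>i. Suc i < length s \<longrightarrow> s ! Suc i = Suc (s ! i) \<or> Suc (s ! Suc i) = s ! i)}"

definition down_wt :: "nat \<Rightarrow> word" where
  "down_wt i = (if i = 1 then y1w else if i = 2 then y2w else if i = 3 then y3w else [])"

definition step_wt :: "nat \<Rightarrow> nat \<Rightarrow> word" where
  "step_wt i j = (if j = Suc i then [] else down_wt i)"

definition path_weight :: "nat list \<Rightarrow> word" where
  "path_weight s = foldl gmul [] (map (\<lambda>(i, j). step_wt i j) (zip s (tl s)))"

end

theory Submission
  imports Defs "HOL-Library.Poly_Mapping"
begin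

text \<open>The frieze relation is solved by a second order linear recurrence
  \<open>R\<^sub>n\<^sub>+\<^sub>2 = R\<^sub>n\<^sub>+\<^sub>1 A - R\<^sub>n C\<^sup>-\<^sup>1\<close> in the group ring of the free group: the quantity
  \<open>R\<^sub>n\<^sub>+\<^sub>1 C R\<^sub>n\<^sub>-\<^sub>1 - R\<^sub>n\<^sup>2\<close> is invariant along solutions of that recurrence which also satisfy a
  companion recurrence with left coefficients. For \<open>n \<ge> 0\<close>, the transfer equations for walks on
  \<open>{0, 1, 2, 3}\<close> turn into the same linear recurrence, so \<open>R\<^sub>n R\<^sub>0\<^sup>-\<^sup>1\<close> is the sum of the weights
  of the closed walks of length \<open>2n\<close>. A walk is recovered from its reduced weight, because the end
  of the weight reveals the last down-step; hence every coefficient is \<open>0\<close> or \<open>1\<close> and every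
  monomial is the weight of exactly one walk. Finally an anti-automorphism of the free group
  exchanging \<open>R\<^sub>0\<close> and \<open>R\<^sub>1\<close> maps \<open>R\<^sub>n\<close> to \<open>R\<^sub>1\<^sub>-\<^sub>n\<close>, which covers \<open>n < 0\<close>.\<close>

section \<open>Reduced words and the free group\<close>

lemma inv_letter_inv_letter [simp]: "inv_letter (inv_letter a) = a"
  by (simp add: inv_letter_def)

lemma reduced_Nil [simp]: "reduced []"
  and reduced_singleton [simp]: "reduced [a]"
  by (simp_all add: reduced_def)

lemma reduced_Cons_Cons [simp]: "reduced (a # b # w) \<longleftrightarrow> b \<noteq> inv_letter a \<and> reduced (b # w)"
  by (auto simp: reduced_def nth_Cons split: nat.splits)

lemma reduced_ConsD: "reduced (a # w) \<Longrightarrow> reduced w"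
  by (cases w) simp_all

lemma reduced_append:
  "reduced (u @ v) \<longleftrightarrow> reduced u \<and> reduced v \<and> (u = [] \<or> v = [] \<or> hd v \<noteq> inv_letter (last u))"
proof (induction u)
  case (Cons a u)
  then show ?case by (cases u; cases v) auto
qed simp

lemma reduced_red_cons: "reduced w \<Longrightarrow> reduced (red_cons a w)"
  by (cases w) (auto dest: reduced_ConsD)

lemma reduced_foldr_red_cons: "reduced z \<Longrightarrow> reduced (foldr red_cons u z)"
  by (induction u) (auto intro: reduced_red_cons)

lemma reduce_Nil [simp]: "reduce [] = []"
  by (simp add: reduce_def)

lemma reduce_Cons: "reduce (a # w) = red_cons a (reduce w)"
  by (simp add: reduce_def)

lemma reduce_append: "reduce (u @ v) = foldr red_cons u (reduce v)"
  by (simp add: reduce_def)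

lemma reduced_reduce [simp]: "reduced (reduce w)"
  unfolding reduce_def by (rule reduced_foldr_red_cons) simp

lemma reduce_reduced: "reduced w \<Longrightarrow> reduce w = w"
proof (induction w)
  case (Cons a w)
  then show ?case by (cases w) (auto simp: reduce_Cons dest: reduced_ConsD)
qed simp

lemma reduce_reduce [simp]: "reduce (reduce w) = reduce w"
  by (simp add: reduce_reduced)

lemma red_cons_cancel: "reduced w \<Longrightarrow> red_cons a (red_cons (inv_letter a) w) = w"
  by (cases w; cases "tl w") auto

lemma foldr_red_cons_red_cons:
  assumes "reduced w" "reduced z"
  shows "foldr red_cons (red_cons a w) z = red_cons a (foldr red_cons w z)"
proof (cases w)
  case (Cons b v)
  with assms have "reduced (foldr red_cons v z)"
    by (auto intro: reduced_foldr_red_cons dest: reduced_ConsD)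
  with Cons show ?thesis
    using red_cons_cancel[of "foldr red_cons v z" a] by auto
qed simp

lemma foldr_red_cons_reduce: "reduced z \<Longrightarrow> foldr red_cons (reduce u) z = foldr red_cons u z"
  by (induction u) (simp_all add: reduce_Cons foldr_red_cons_red_cons)

lemma reduce_append_reduce_left: "reduce (reduce u @ v) = reduce (u @ v)"
  by (simp add: reduce_append foldr_red_cons_reduce)

lemma reduce_append_reduce_right: "reduce (u @ reduce v) = reduce (u @ v)"
  by (simp add: reduce_append)

lemma reduced_gmul [simp]: "reduced (gmul u v)"
  by (simp add: gmul_def)

lemma gmul_assoc: "gmul (gmul u v) w = gmul u (gmul v w)"
  unfolding gmul_def by (metis append.assoc reduce_append_reduce_left reduce_append_reduce_right)

lemma gmul_Nil_left: "reduced u \<Longrightarrow> gmul [] u = u"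
  and gmul_Nil_right: "reduced u \<Longrightarrow> gmul u [] = u"
  by (simp_all add: gmul_def reduce_reduced)

lemma ginv_ginv [simp]: "ginv (ginv w) = w"
  by (simp add: ginv_def rev_map comp_def)

lemma reduce_ginv_append: "reduce (ginv w @ w) = []"
proof -
  have "foldr red_cons (ginv w) (foldr red_cons w z) = z" if "reduced z" for z
    using that
  proof (induction w)
    case (Cons a w)
    have "foldr red_cons (ginv (a # w)) (foldr red_cons (a # w) z)
        = foldr red_cons (ginv w) (red_cons (inv_letter a) (red_cons a (foldr red_cons w z)))"
      by (simp add: ginv_def)
    also have "\<dots> = z"
      using red_cons_cancel[of "foldr red_cons w z" "inv_letter a"] Cons
      by (simp add: reduced_foldr_red_cons)
    finally show ?case .
  qed (simp add: ginv_def)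
  then show ?thesis by (simp add: reduce_append reduce_def)
qed

lemma reduce_append_ginv: "reduce (w @ ginv w) = []"
  using reduce_ginv_append[of "ginv w"] by simp

lemma gmul_right_cancel: "reduced u \<Longrightarrow> reduced v \<Longrightarrow> gmul u z = gmul v z \<Longrightarrow> u = v"
  by (metis gmul_Nil_right gmul_assoc gmul_def reduce_append_ginv)

text \<open>The free group is written additively, as an instance of \<open>group_add\<close>, so that
  \<open>fg \<Rightarrow>\<^sub>0 int\<close> with the convolution product of \<open>Poly_Mapping\<close> is its group ring.\<close>

typedef fg = "{w. reduced w}" morphisms word_of Abs_fg
  by (rule exI[of _ "[]"]) simp

setup_lifting type_definition_fg

lemma reduced_word_of [simp]: "reduced (word_of g)"
  using word_of by simp

instantiation fg :: group_add
begin

lift_definition zero_fg :: fg is "[]" by simp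
lift_definition plus_fg :: "fg \<Rightarrow> fg \<Rightarrow> fg" is gmul by simp
lift_definition uminus_fg :: "fg \<Rightarrow> fg" is "\<lambda>w. reduce (ginv w)" by simp
definition minus_fg :: "fg \<Rightarrow> fg \<Rightarrow> fg" where "minus_fg a b = a + - b"

instance
proof
  fix a b c :: fg
  show "a + b + c = a + (b + c)" by transfer (rule gmul_assoc)
  show "0 + a = a" by transfer (rule gmul_Nil_left)
  show "a + 0 = a" by transfer (rule gmul_Nil_right)
  show "- a + a = 0" by transfer (simp add: gmul_def reduce_append_reduce_left reduce_ginv_append)
  show "a + - b = a - b" by (simp add: minus_fg_def)
qed

end

lift_definition fg_of :: "word \<Rightarrow> fg" is reduce by simp

lemma fg_of_word_of [simp]: "fg_of (word_of g) = g"
  by transfer (rule reduce_reduced)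

lemma fg_of_eq_iff: "fg_of u = fg_of v \<longleftrightarrow> reduce u = reduce v"
  by transfer simp

lemma fg_of_reduced_eq_iff: "reduced u \<Longrightarrow> reduced v \<Longrightarrow> fg_of u = fg_of v \<longleftrightarrow> u = v"
  by (simp add: fg_of_eq_iff reduce_reduced)

lemma fg_of_Nil: "fg_of [] = 0"
  by transfer simp

lemma fg_of_append: "fg_of (u @ v) = fg_of u + fg_of v"
  by transfer (simp add: gmul_def reduce_append_reduce_left reduce_append_reduce_right)

lemma fg_of_gmul: "fg_of (gmul u v) = fg_of u + fg_of v"
  by (simp add: gmul_def fg_of_eq_iff flip: fg_of_append)

lemma word_of_fg_of: "reduced w \<Longrightarrow> word_of (fg_of w) = w"
  by (simp add: fg_of.rep_eq reduce_reduced)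

lemma fg_of_eq_iff_word_of: "reduced w \<Longrightarrow> fg_of w = g \<longleftrightarrow> w = word_of g"
  by (metis fg_of.rep_eq fg_of_word_of reduce_reduced)

section \<open>The group ring of the free group\<close>

type_synonym gring = "fg \<Rightarrow>\<^sub>0 int"

definition mon :: "word \<Rightarrow> gring" where
  "mon w = Poly_Mapping.single (fg_of w) 1"

lemma mon_Nil: "mon [] = 1"
  by (simp add: mon_def fg_of_Nil)

lemma lookup_mult_keys:
  "Poly_Mapping.lookup (p * q) k = (\<Sum>(a, b) \<in> Poly_Mapping.keys p \<times> Poly_Mapping.keys q.
      Poly_Mapping.lookup p a * Poly_Mapping.lookup q b when k = a + b)"
  unfolding times_poly_mapping.rep_eq prod_fun_unfold_prod[OF finite_lookup finite_lookup]
  by (rule Sum_any.expand_superset) (auto simp: in_keys_iff)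

lemma lookup_mult_single:
  "Poly_Mapping.lookup (p * Poly_Mapping.single r 1) k = Poly_Mapping.lookup (p :: gring) (k - r)"
proof -
  have "k = a + r \<longleftrightarrow> a = k - r" for a
    by (auto simp: eq_diff_eq)
  then have "Poly_Mapping.lookup (p * Poly_Mapping.single r 1) k
      = (\<Sum>a \<in> Poly_Mapping.keys p. Poly_Mapping.lookup p a when a = k - r)"
    by (simp add: lookup_mult_keys sum.cartesian_product[symmetric] when_def)
  then show ?thesis
    by (simp add: when_def in_keys_iff)
qed

definition lpoly_of :: "gring \<Rightarrow> lpoly" where
  "lpoly_of p w = (if reduced w then Poly_Mapping.lookup p (fg_of w) else 0)"

lemma word_of_image_iff: "w \<in> word_of ` A \<longleftrightarrow> reduced w \<and> fg_of w \<in> A"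
  by (metis fg_of.rep_eq fg_of_word_of image_iff reduce_reduced reduced_word_of)

lemma support_lpoly_of: "{w. lpoly_of p w \<noteq> 0} = word_of ` Poly_Mapping.keys p"
  by (auto simp: lpoly_of_def word_of_image_iff in_keys_iff split: if_splits)

lemma lpoly_of_word_of [simp]: "lpoly_of p (word_of g) = Poly_Mapping.lookup p g"
  by (simp add: lpoly_of_def)

lemma is_laurent_lpoly_of: "is_laurent (lpoly_of p)"
  unfolding is_laurent_def support_lpoly_of by (simp add: lpoly_of_def split: if_splits)

lemma lpoly_of_add: "lpoly_of (p + q) = ladd (lpoly_of p) (lpoly_of q)"
  by (auto simp: lpoly_of_def ladd_def lookup_add)

lemma lpoly_of_mon: "lpoly_of (mon w) = lmono w"
  by (auto simp: lpoly_of_def lmono_def mon_def lookup_single when_def fg_of_eq_iff reduce_reduced)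

lemma lpoly_of_one: "lpoly_of 1 = lone"
  by (simp add: lone_def flip: lpoly_of_mon mon_Nil)

lemma lmul_lpoly_of: "lmul (lpoly_of p) (lpoly_of q) = lpoly_of (p * q)"
proof
  fix w
  let ?K = "Poly_Mapping.keys p \<times> Poly_Mapping.keys q"
  have inj: "inj_on (map_prod word_of word_of) ?K"
    by (auto simp: inj_on_def word_of_inject)
  have "lmul (lpoly_of p) (lpoly_of q) w
      = (\<Sum>(a, b) \<in> ?K. if gmul (word_of a) (word_of b) = w
                         then Poly_Mapping.lookup p a * Poly_Mapping.lookup q b else 0)"
    unfolding lmul_def support_lpoly_of map_prod_surj_on[OF refl refl, symmetric]
    by (subst sum.reindex[OF inj]) (auto intro!: sum.cong)
  also have "\<dots> = lpoly_of (p * q) w"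
  proof (cases "reduced w")
    case True
    then have "gmul (word_of a) (word_of b) = w \<longleftrightarrow> fg_of w = a + b" for a b
      by (metis fg_of_reduced_eq_iff fg_of_word_of plus_fg.rep_eq reduced_gmul)
    with True show ?thesis
      by (simp add: lpoly_of_def lookup_mult_keys when_def)
  next
    case False
    then show ?thesis
      by (auto simp: lpoly_of_def intro!: sum.neutral)
  qed
  finally show "lmul (lpoly_of p) (lpoly_of q) w = lpoly_of (p * q) w" .
qed

text \<open>Identities between
  explicitly given elements are proved by rewriting both sides into such lists and comparing
  the finitely many coefficients that can be nonzero, which \<open>simp\<close> evaluates.\<close>

definition terms :: "(int \<times> word) list \<Rightarrow> gring" where
  "terms l = (\<Sum>(c, u)\<leftarrow>l. Poly_Mapping.single (fg_of u) c)"

definition terms_uminus :: "(int \<times> word) list \<Rightarrow> (int \<times> word) list" where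
  "terms_uminus l = map (\<lambda>(c, u). (- c, u)) l"

definition terms_times :: "(int \<times> word) list \<Rightarrow> (int \<times> word) list \<Rightarrow> (int \<times> word) list" where
  "terms_times l1 l2 = concat (map (\<lambda>(c, u). map (\<lambda>(d, v). (c * d, u @ v)) l2) l1)"

definition terms_coeff :: "(int \<times> word) list \<Rightarrow> word \<Rightarrow> int" where
  "terms_coeff l w = (\<Sum>(c, u)\<leftarrow>l. if reduce u = w then c else 0)"

lemma terms_Cons: "terms ((c, u) # l) = Poly_Mapping.single (fg_of u) c + terms l"
  by (simp add: terms_def)

lemma terms_zero: "0 = terms []"
  and mon_eq_terms: "mon w = terms [(1, w)]"
  and terms_one: "1 = terms [(1, [])]"
  by (simp_all add: terms_def mon_def fg_of_Nil)

lemma terms_add: "terms l1 + terms l2 = terms (l1 @ l2)"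
  by (simp add: terms_def)

lemma terms_uminus: "- terms l = terms (terms_uminus l)"
  by (induction l) (auto simp: terms_def terms_uminus_def single_uminus)

lemma terms_diff: "terms l1 - terms l2 = terms (l1 @ terms_uminus l2)"
  by (simp flip: terms_add terms_uminus)

lemma terms_mult: "terms l1 * terms l2 = terms (terms_times l1 l2)"
proof (induction l1)
  case (Cons a l1)
  obtain c u where a: "a = (c, u)" by fastforce
  have "Poly_Mapping.single (fg_of u) c * terms l2 = terms (map (\<lambda>(d, v). (c * d, u @ v)) l2)"
    by (induction l2) (auto simp: terms_def distrib_left mult_single fg_of_append)
  with Cons a show ?case
    by (simp add: terms_Cons distrib_right terms_times_def flip: terms_add)
qed (simp add: terms_def terms_times_def)

lemma lookup_terms: "reduced w \<Longrightarrow> Poly_Mapping.lookup (terms l) (fg_of w) = terms_coeff l w"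
  by (induction l) (auto simp: terms_def terms_coeff_def lookup_add lookup_single when_def
      fg_of_eq_iff reduce_reduced)

lemma terms_eqI:
  assumes "\<forall>w \<in> set (map (reduce \<circ> snd) (l1 @ l2)). terms_coeff l1 w = terms_coeff l2 w"
  shows "terms l1 = terms l2"
proof (rule poly_mapping_eqI)
  fix g
  have vanish: "terms_coeff l (word_of g) = 0" if "word_of g \<notin> set (map (reduce \<circ> snd) l)" for l
    using that unfolding terms_coeff_def by (induction l) auto
  show "Poly_Mapping.lookup (terms l1) g = Poly_Mapping.lookup (terms l2) g"
    using lookup_terms[of "word_of g"] assms vanish[of l1] vanish[of l2]
    by (cases "word_of g \<in> set (map (reduce \<circ> snd) (l1 @ l2))") auto
qed

lemmas terms_eval = terms_zero terms_one mon_eq_terms terms_add terms_diff terms_mult terms_uminus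
  terms_uminus_def terms_times_def

lemmas word_eval = terms_coeff_def reduce_def inv_letter_def gmul_def ginv_def

section \<open>Second order linear recurrences in a ring\<close>

definition lin_rec :: "'a::ring_1 \<Rightarrow> 'a \<Rightarrow> (int \<Rightarrow> 'a) \<Rightarrow> bool" where
  "lin_rec a b S \<longleftrightarrow> (\<forall>z. S (z + 2) = S (z + 1) * a - S z * b)"

lemma lin_rec_step:
  assumes "lin_rec a b S"
  shows "S (z + 1) = S z * a - S (z - 1) * b"
proof -
  have "z - 1 + 2 = z + 1" "z - 1 + 1 = z"
    by simp_all
  with assms show ?thesis
    unfolding lin_rec_def by metis
qed

lemma lin_rec_eqI:
  assumes S: "lin_rec a b S" and T: "lin_rec a b T" and inv: "b * b' = 1"
    and "S k = T k" "S (k + 1) = T (k + 1)"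
  shows "S z = T z"
proof -
  have "S z = T z \<and> S (z + 1) = T (z + 1)"
  proof (induction z rule: int_induct[where k = k])
    case (step1 i)
    then show ?case
      using S T by (simp add: lin_rec_def add.assoc)
  next
    case (step2 i)
    have "S (i - 1) * b = S i * a - S (i + 1)" "T (i - 1) * b = T i * a - T (i + 1)"
      using lin_rec_step[OF S, of i] lin_rec_step[OF T, of i] by simp_all
    with step2 have "S (i - 1) * b * b' = T (i - 1) * b * b'"
      by simp
    with step2 inv show ?case
      by (simp add: mult.assoc)
  qed (use assms in simp)
  then show ?thesis ..
qed

lemma lin_rec_left_comb:
  assumes "lin_rec a b S"
  shows "lin_rec a b (\<lambda>z. p * S (z + 2) + q * S (z + 1) + r * S z)"
  unfolding lin_rec_def
proof
  fix z :: int
  have idx: "z + 2 + 2 = z + 4" "z + 2 + 1 = z + 3" "z + 1 + 2 = z + 3" "z + 1 + 1 = z + 2"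
    by simp_all
  have rec: "S (z + 2 + 2) = S (z + 2 + 1) * a - S (z + 2) * b"
    "S (z + 1 + 2) = S (z + 1 + 1) * a - S (z + 1) * b" "S (z + 2) = S (z + 1) * a - S z * b"
    using assms unfolding lin_rec_def by blast+
  show "p * S (z + 2 + 2) + q * S (z + 2 + 1) + r * S (z + 2)
      = (p * S (z + 1 + 2) + q * S (z + 1 + 1) + r * S (z + 1)) * a - (p * S (z + 2) + q * S (z + 1) + r * S z) * b"
    unfolding idx rec[unfolded idx] by (simp add: algebra_simps)
qed

fun lin_rec_nat :: "'a::ring_1 \<Rightarrow> 'a \<Rightarrow> 'a \<Rightarrow> 'a \<Rightarrow> nat \<Rightarrow> 'a" where
  "lin_rec_nat a b r0 r1 0 = r0"
| "lin_rec_nat a b r0 r1 (Suc 0) = r1"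
| "lin_rec_nat a b r0 r1 (Suc (Suc n)) = lin_rec_nat a b r0 r1 (Suc n) * a - lin_rec_nat a b r0 r1 n * b"

text \<open>Read backwards, \<open>z \<mapsto> S (1 - z)\<close>, a solution of \<open>lin_rec a b\<close> solves the recurrence
  with coefficients \<open>a * b'\<close> and \<open>b'\<close>, where \<open>b'\<close> is the inverse of \<open>b\<close>.\<close>

definition lin_rec_seq :: "'a::ring_1 \<Rightarrow> 'a \<Rightarrow> 'a \<Rightarrow> 'a \<Rightarrow> 'a \<Rightarrow> int \<Rightarrow> 'a" where
  "lin_rec_seq a b b' r0 r1 z =
    (if 0 \<le> z then lin_rec_nat a b r0 r1 (nat z) else lin_rec_nat (a * b') b' r1 r0 (nat (1 - z)))"

lemma lin_rec_seq_0 [simp]: "lin_rec_seq a b b' r0 r1 0 = r0"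
  and lin_rec_seq_1 [simp]: "lin_rec_seq a b b' r0 r1 1 = r1"
  by (simp_all add: lin_rec_seq_def)

lemma lin_rec_seq_le_1:
  "z \<le> 1 \<Longrightarrow> lin_rec_seq a b b' r0 r1 z = lin_rec_nat (a * b') b' r1 r0 (nat (1 - z))"
  by (cases "z = 0 \<or> z = 1") (auto simp: lin_rec_seq_def)

lemma lin_rec_lin_rec_seq:
  assumes "b' * b = 1"
  shows "lin_rec a b (lin_rec_seq a b b' r0 r1)"
  unfolding lin_rec_def
proof
  fix z :: int
  let ?S = "lin_rec_seq a b b' r0 r1" and ?T = "lin_rec_nat (a * b') b' r1 r0"
  show "?S (z + 2) = ?S (z + 1) * a - ?S z * b"
  proof (cases "0 \<le> z")
    case True
    then have "nat (z + 2) = Suc (Suc (nat z))" "nat (z + 1) = Suc (nat z)"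
      by simp_all
    with True show ?thesis
      by (simp add: lin_rec_seq_def)
  next
    case False
    define n where "n = nat (- 1 - z)"
    have "nat (1 - z) = Suc (Suc n)" "nat (1 - (z + 1)) = Suc n" "nat (1 - (z + 2)) = n"
      using False by (simp_all add: n_def)
    then have "?S z * b = ?T (Suc n) * a * (b' * b) - ?T n * (b' * b)"
      "?S (z + 1) = ?T (Suc n)" "?S (z + 2) = ?T n"
      using False by (simp_all add: lin_rec_seq_le_1 algebra_simps)
    with assms show ?thesis
      by simp
  qed
qed

lemma lin_rec_quadratic_invariant:
  fixes R :: "int \<Rightarrow> 'a::ring_1"
  assumes right: "lin_rec a b R" and left: "\<And>z. R (z + 2) = a * b' * R (z + 1) - b' * R z"
    and inv: "b * b' = 1"
  shows "R (z + 1) * b' * R (z - 1) - R z * R z = R 1 * b' * R (- 1) - R 0 * R 0"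
proof -
  define D where "D z = R (z + 1) * b' * R (z - 1) - R z * R z" for z
  have "D (z + 1) = D z" for z
  proof -
    have idx: "z - 1 + 2 = z + 1" "z - 1 + 1 = z"
      by simp_all
    have "D (z + 1) - D z = (R (z + 2) - (R (z + 1) * a - R z * b)) * b' * R z
        + R (z + 1) * ((a * b' * R z - b' * R (z - 1)) - R (z + 1)) - R z * (b * b' - 1) * R z"
      by (simp add: D_def algebra_simps add.assoc)
    also have "\<dots> = 0"
      using right left[of "z - 1"] inv unfolding lin_rec_def idx by simp
    finally show ?thesis
      by simp
  qed
  then have "D z = D 0"
    by (induction z rule: int_induct[where k = 0]) (metis diff_add_cancel)+
  then show ?thesis
    by (simp add: D_def)
qed

abbreviation lx :: letter where "lx \<equiv> (False, True)"
abbreviation lX :: letter where "lX \<equiv> (False, False)"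
abbreviation ly :: letter where "ly \<equiv> (True, True)"
abbreviation lY :: letter where "lY \<equiv> (True, False)"

lemma words_eq:
  "yw = [ly]" "C_word = [lx, ly, lX, lY]" "R0_word = [ly, lx, lY]" "ginv R0_word = [ly, lX, lY]"
  "y1w = [ly, ly, lX, lY]" "y2w = [lX, lY]" "y3w = [lx, lY]"
  by (simp_all add: yw_def xw_def C_word_def R0_word_def y1w_def y2w_def y3w_def word_eval)

definition C :: gring where
  "C = mon [lx, ly, lX, lY]"

definition C_inv :: gring where
  "C_inv = mon [ly, lx, lY, lX]"

text \<open>The coefficient \<open>A\<close> is forced by the frieze relation at \<open>n = 1\<close>:
  \<open>A = R\<^sub>1 R\<^sub>0\<^sup>-\<^sup>1 C\<^sup>-\<^sup>1 + R\<^sub>1\<^sup>-\<^sup>1 (R\<^sub>0 + R\<^sub>0\<^sup>-\<^sup>1) C\<^sup>-\<^sup>1\<close>.\<close>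

definition A :: gring where
  "A = mon [ly, lX] + mon [lY, lX] + mon [lx, lx, lY, lX]"

definition Rseq :: "int \<Rightarrow> gring" where
  "Rseq = lin_rec_seq A C_inv C (mon [ly, lx, lY]) (mon [ly])"

lemmas gring_eval = A_def C_def C_inv_def terms_eval

lemma C_mult_C_inv: "C * C_inv = 1"
  and C_inv_mult_C: "C_inv * C = 1"
  by (simp only: gring_eval, rule terms_eqI, simp add: word_eval)+

lemma lin_rec_Rseq: "lin_rec A C_inv Rseq"
  unfolding Rseq_def by (rule lin_rec_lin_rec_seq[OF C_mult_C_inv])

lemma Rseq_0: "Rseq 0 = mon [ly, lx, lY]"
  and Rseq_1: "Rseq 1 = mon [ly]"
  by (simp_all add: Rseq_def)

lemma Rseq_2: "Rseq 2 = Rseq 1 * A - Rseq 0 * C_inv"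
  using lin_rec_Rseq unfolding lin_rec_def by (metis add_0)

lemma Rseq_minus_1: "Rseq (- 1) = (Rseq 0 * A - Rseq 1) * C"
proof -
  have "Rseq (- 1) * C_inv = Rseq 0 * A - Rseq 1"
    using lin_rec_step[OF lin_rec_Rseq, of 0] by simp
  then have "Rseq (- 1) * (C_inv * C) = (Rseq 0 * A - Rseq 1) * C"
    by (simp flip: mult.assoc)
  then show ?thesis
    by (simp add: C_inv_mult_C)
qed

lemma Rseq_left_rec: "Rseq (z + 2) = A * C * Rseq (z + 1) - C * Rseq z"
proof -
  let ?L = "\<lambda>z. Rseq (z + 2) - A * C * Rseq (z + 1) + C * Rseq z"
  have rec: "lin_rec A C_inv ?L"
    using lin_rec_left_comb[OF lin_rec_Rseq, of 1 "- (A * C)" C] by simp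
  have "Rseq 1 - A * C * Rseq 0 + C * Rseq (- 1) = 0"
    "Rseq 2 - A * C * Rseq 1 + C * Rseq 0 = 0"
    unfolding Rseq_minus_1 Rseq_2 Rseq_0 Rseq_1
    by (simp only: gring_eval, rule terms_eqI, simp add: word_eval)+
  then have "?L (- 1) = 0" "?L (- 1 + 1) = 0"
    by simp_all
  then have "?L z = 0"
    using lin_rec_eqI[OF rec _ C_inv_mult_C, where T = "\<lambda>_. 0" and k = "- 1"]
    by (simp add: lin_rec_def)
  then show ?thesis
    by (simp add: algebra_simps)
qed

lemma Rseq_frieze: "Rseq (z + 1) * C * Rseq (z - 1) = Rseq z * Rseq z + 1"
proof -
  have "Rseq 1 * C * Rseq (- 1) - Rseq 0 * Rseq 0 = 1"
    unfolding Rseq_minus_1 Rseq_0 Rseq_1 by (simp only: gring_eval, rule terms_eqI, simp add: word_eval)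
  with lin_rec_quadratic_invariant[OF lin_rec_Rseq Rseq_left_rec C_inv_mult_C, of z] show ?thesis
    by (metis add.commute diff_add_cancel)
qed

section \<open>An anti-automorphism exchanging \<open>R\<^sub>n\<close> and \<open>R\<^sub>1\<^sub>-\<^sub>n\<close>\<close>

lemma map_key_mult_anti_involution:
  fixes f :: "'a::monoid_add \<Rightarrow> 'a" and p q :: "'a \<Rightarrow>\<^sub>0 'b::comm_semiring_0"
  assumes invol: "\<And>g. f (f g) = g" and anti: "\<And>g h. f (g + h) = f h + f g"
  shows "Poly_Mapping.map_key f (p * q) = Poly_Mapping.map_key f q * Poly_Mapping.map_key f p"
proof (rule poly_mapping_eqI)
  fix k
  have inj: "inj f"
    by (metis invol injI)
  let ?p = "Poly_Mapping.lookup p" and ?q = "Poly_Mapping.lookup q"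
  have "Poly_Mapping.lookup (Poly_Mapping.map_key f (p * q)) k = (\<Sum>(a, b). ?p a * ?q b when f k = a + b)"
    by (simp add: map_key.rep_eq[OF inj] times_poly_mapping.rep_eq prod_fun_unfold_prod)
  also have "\<dots> = (\<Sum>(c, d). ?q (f c) * ?p (f d) when k = c + d)"
  proof (rule Sum_any.reindex_cong[of "\<lambda>(c, d). (f d, f c)"])
    show "bij (\<lambda>(c, d). (f d, f c))"
      by (rule o_bij[of "\<lambda>(c, d). (f d, f c)"]) (auto simp: fun_eq_iff invol)
    have "f k = f d + f c \<longleftrightarrow> k = c + d" for c d
      by (metis anti invol)
    then show "(\<lambda>(a, b). ?p a * ?q b when f k = a + b) \<circ> (\<lambda>(c, d). (f d, f c))
        = (\<lambda>(c, d). ?q (f c) * ?p (f d) when k = c + d)"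
      by (auto simp: fun_eq_iff mult.commute)
  qed
  also have "\<dots> = Poly_Mapping.lookup (Poly_Mapping.map_key f q * Poly_Mapping.map_key f p) k"
    unfolding times_poly_mapping.rep_eq prod_fun_unfold_prod[OF finite_lookup finite_lookup]
    by (simp add: map_key.rep_eq[OF inj])
  finally show "Poly_Mapping.lookup (Poly_Mapping.map_key f (p * q)) k
      = Poly_Mapping.lookup (Poly_Mapping.map_key f q * Poly_Mapping.map_key f p) k" .
qed

definition anti_letter :: "letter \<Rightarrow> word" where
  "anti_letter a = (if a = lx then [ly, lx, ly, lX, lY] else if a = lX then [ly, lx, lY, lX, lY]
                    else if a = ly then [ly, lx, lY] else [ly, lX, lY])"

fun anti_word :: "word \<Rightarrow> word" where
  "anti_word [] = []"
| "anti_word (a # w) = gmul (anti_word w) (anti_letter a)"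

lemma reduced_anti_word [simp]: "reduced (anti_word w)"
  by (cases w) simp_all

lemma anti_word_red_cons: "anti_word (red_cons a w) = anti_word (a # w)"
proof (cases w)
  case (Cons b v)
  have "gmul (anti_letter (inv_letter a)) (anti_letter a) = []"
    by (cases a) (auto simp: anti_letter_def word_eval)
  with Cons show ?thesis
    by (auto simp: gmul_assoc gmul_Nil_right)
qed simp

lemma anti_word_reduce: "anti_word (reduce w) = anti_word w"
  by (induction w) (simp_all add: reduce_Cons anti_word_red_cons)

lemma anti_word_append: "anti_word (u @ v) = gmul (anti_word v) (anti_word u)"
  by (induction u) (simp_all add: gmul_Nil_right gmul_assoc)

lemma anti_word_anti_word: "anti_word (anti_word w) = reduce w"
proof (induction w)
  case (Cons a w)
  have "anti_word (anti_letter a) = [a]"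
    by (cases a) (auto simp: anti_letter_def word_eval)
  then have "anti_word (anti_word (a # w)) = gmul [a] (reduce w)"
    by (simp add: gmul_def anti_word_reduce anti_word_append Cons)
  then show ?case
    by (simp add: gmul_def reduce_append_reduce_right reduce_Cons)
qed simp

lift_definition anti :: "fg \<Rightarrow> fg" is anti_word
  by simp

lemma anti_fg_of: "anti (fg_of w) = fg_of (anti_word w)"
  by transfer (simp add: anti_word_reduce reduce_reduced)

lemma anti_anti [simp]: "anti (anti g) = g"
  by transfer (simp add: anti_word_anti_word reduce_reduced)

lemma anti_plus: "anti (g + h) = anti h + anti g"
  by transfer (simp add: gmul_def anti_word_reduce anti_word_append)

definition reflect :: "gring \<Rightarrow> gring" where
  "reflect = Poly_Mapping.map_key anti"

lemma lookup_reflect: "Poly_Mapping.lookup (reflect p) g = Poly_Mapping.lookup p (anti g)"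
  by (simp add: reflect_def map_key.rep_eq[OF inj_on_inverseI[of _ anti]])

lemma reflect_mult: "reflect (p * q) = reflect q * reflect p"
  unfolding reflect_def by (rule map_key_mult_anti_involution[OF anti_anti anti_plus])

lemma reflect_diff: "reflect (p - q) = reflect p - reflect q"
  by (rule poly_mapping_eqI) (simp add: lookup_reflect lookup_minus)

lemma reflect_add: "reflect (p + q) = reflect p + reflect q"
  by (rule poly_mapping_eqI) (simp add: lookup_reflect lookup_add)

lemma reflect_mon: "reflect (mon w) = mon (anti_word w)"
  by (rule poly_mapping_eqI)
    (auto simp: lookup_reflect mon_def lookup_single when_def anti_fg_of[symmetric] dest: arg_cong[of _ _ anti])

lemma reflect_C: "reflect C = C"
  and reflect_A: "reflect A = C_inv * A * C"
  and reflect_Rseq_0: "reflect (Rseq 0) = Rseq 1"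
  and reflect_Rseq_1: "reflect (Rseq 1) = Rseq 0"
  unfolding Rseq_0 Rseq_1 A_def C_def C_inv_def reflect_add reflect_mon
  by (simp_all add: anti_letter_def word_eval, simp only: terms_eval, rule terms_eqI, simp add: word_eval)

lemma reflect_A_C: "reflect (A * C) = A * C"
  by (simp add: reflect_mult reflect_A reflect_C C_mult_C_inv flip: mult.assoc)

lemma Rseq_reflect: "Rseq z = reflect (Rseq (1 - z))"
proof -
  let ?S = "\<lambda>z. reflect (Rseq (1 - z))"
  have rec: "lin_rec A C_inv ?S"
    unfolding lin_rec_def
  proof
    fix z :: int
    have idx: "1 - (z + 2) + 2 = 1 - z" "1 - (z + 2) + 1 = 1 - (z + 1)"
      by simp_all
    have "Rseq (1 - z) = A * C * Rseq (1 - (z + 1)) - C * Rseq (1 - (z + 2))"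
      using Rseq_left_rec[of "1 - (z + 2)"] unfolding idx .
    then have "?S z = ?S (z + 1) * (A * C) - ?S (z + 2) * C"
      by (simp only: reflect_diff reflect_mult[of "A * C"] reflect_mult[of C] reflect_A_C reflect_C)
    then have "?S z * C_inv = ?S (z + 1) * A * (C * C_inv) - ?S (z + 2) * (C * C_inv)"
      by (simp add: left_diff_distrib mult.assoc)
    then show "?S (z + 2) = ?S (z + 1) * A - ?S z * C_inv"
      by (simp add: C_mult_C_inv)
  qed
  show ?thesis
    by (rule lin_rec_eqI[OF lin_rec_Rseq rec C_inv_mult_C, where k = 0])
      (simp_all add: reflect_Rseq_0 reflect_Rseq_1)
qed

section \<open>Walks on \<open>{0, 1, 2, 3}\<close>\<close>

definition walks :: "nat \<Rightarrow> nat list set" where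
  "walks k = {s. length s = k + 1 \<and> hd s = 0 \<and> set s \<subseteq> {0..3} \<and>
      (\<forall>i. Suc i < length s \<longrightarrow> s ! Suc i = Suc (s ! i) \<or> Suc (s ! Suc i) = s ! i)}"

lemma paths_eq_walks: "paths n = {s \<in> walks (2 * n). last s = 0}"
  unfolding paths_def walks_def by blast

lemma walks_0: "walks 0 = {[0]}"
  by (auto simp: walks_def length_Suc_conv)

lemma all_steps_snoc:
  assumes "s \<noteq> []"
  shows "(\<forall>i. Suc i < length (s @ [j]) \<longrightarrow> P ((s @ [j]) ! i) ((s @ [j]) ! Suc i)) \<longleftrightarrow>
    (\<forall>i. Suc i < length s \<longrightarrow> P (s ! i) (s ! Suc i)) \<and> P (last s) j"
proof -
  obtain n where n: "length s = Suc n"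
    using assms by (cases s) auto
  have "Suc i < length (s @ [j]) \<longleftrightarrow> Suc i < length s \<or> i = n" for i
    using n by auto
  moreover have "(s @ [j]) ! i = s ! i" "(s @ [j]) ! Suc i = s ! Suc i" if "Suc i < length s" for i
    using that by (simp_all add: nth_append)
  moreover have "(s @ [j]) ! n = last s" "(s @ [j]) ! Suc n = j"
    using n assms by (simp_all add: nth_append last_conv_nth)
  ultimately show ?thesis
    by (metis (no_types, lifting))
qed

lemma walks_Suc:
  "s \<in> walks (Suc k) \<longleftrightarrow>
    (\<exists>s' j. s = s' @ [j] \<and> s' \<in> walks k \<and> j \<le> 3 \<and> (j = Suc (last s') \<or> Suc j = last s'))"
proof
  assume s: "s \<in> walks (Suc k)"
  then have "s \<noteq> []"
    by (auto simp: walks_def)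
  then obtain s' j where sj: "s = s' @ [j]"
    using rev_exhaust by blast
  with s have "s' \<noteq> []"
    by (auto simp: walks_def)
  with s sj show "\<exists>s' j. s = s' @ [j] \<and> s' \<in> walks k \<and> j \<le> 3 \<and> (j = Suc (last s') \<or> Suc j = last s')"
    using all_steps_snoc[of s' j "\<lambda>a b. b = Suc a \<or> Suc b = a"] by (auto simp: walks_def)
next
  assume "\<exists>s' j. s = s' @ [j] \<and> s' \<in> walks k \<and> j \<le> 3 \<and> (j = Suc (last s') \<or> Suc j = last s')"
  then obtain s' j where "s = s' @ [j]" "s' \<in> walks k" "j \<le> 3" "j = Suc (last s') \<or> Suc j = last s'"
    by blast
  moreover from this have "s' \<noteq> []"
    by (auto simp: walks_def)
  ultimately show "s \<in> walks (Suc k)"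
    using all_steps_snoc[of s' j "\<lambda>a b. b = Suc a \<or> Suc b = a"] by (auto simp: walks_def)
qed

lemma walks_nonempty: "s \<in> walks k \<Longrightarrow> s \<noteq> []"
  by (auto simp: walks_def)

lemma last_walk_le_3: "s \<in> walks k \<Longrightarrow> last s \<le> 3"
  using last_in_set[OF walks_nonempty] by (fastforce simp: walks_def)

lemma finite_walks: "finite (walks k)"
proof (rule finite_subset)
  show "walks k \<subseteq> {s. set s \<subseteq> {0..3} \<and> length s = k + 1}"
    by (auto simp: walks_def)
qed (rule finite_lists_length_eq, simp)

lemma walks_parity: "s \<in> walks k \<Longrightarrow> even (k + last s)"
proof (induction k arbitrary: s)
  case (Suc k)
  then obtain s' j where "s = s' @ [j]" "s' \<in> walks k" "j = Suc (last s') \<or> Suc j = last s'"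
    by (auto simp: walks_Suc)
  moreover from this have "even (k + last s')"
    using Suc.IH by blast
  ultimately show ?case
    by auto presburger+
qed (simp add: walks_0)

lemma path_weight_singleton: "path_weight [i] = []"
  by (simp add: path_weight_def)

lemma path_weight_snoc:
  assumes "s \<noteq> []"
  shows "path_weight (s @ [j]) = gmul (path_weight s) (step_wt (last s) j)"
proof -
  have "zip (s @ [j]) (tl (s @ [j])) = zip s (tl s) @ [(last s, j)]"
    using assms by (induction s rule: induct_list012) auto
  then show ?thesis
    by (simp add: path_weight_def)
qed

lemma reduced_path_weight [simp]: "reduced (path_weight s)"
proof -
  have "reduced (foldl gmul [] ws)" for ws
    by (induction ws rule: rev_induct) auto
  then show ?thesis
    by (simp add: path_weight_def)
qed

definition Y :: "nat \<Rightarrow> gring" where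
  "Y i = mon (down_wt i)"

lemma down_wt_eq: "down_wt 1 = [ly, ly, lX, lY]" "down_wt 2 = [lX, lY]" "down_wt 3 = [lx, lY]"
  by (simp_all add: down_wt_def words_eq)

definition walk_sum :: "nat \<Rightarrow> nat \<Rightarrow> gring" where
  "walk_sum k j = (\<Sum>s \<in> {s \<in> walks k. last s = j}. mon (path_weight s))"

lemma lookup_walk_sum:
  "Poly_Mapping.lookup (walk_sum k j) g = int (card {s \<in> walks k. last s = j \<and> path_weight s = word_of g})"
proof -
  have "Poly_Mapping.lookup (walk_sum k j) g
      = (\<Sum>s \<in> {s \<in> walks k. last s = j}. if path_weight s = word_of g then 1 else 0)"
    by (auto simp: walk_sum_def mon_def lookup_sum lookup_single when_def fg_of_eq_iff_word_of
        word_of_fg_of intro!: sum.cong)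
  also have "\<dots> = int (card {s \<in> {s \<in> walks k. last s = j}. path_weight s = word_of g})"
    by (simp add: sum.inter_filter[symmetric] finite_walks)
  finally show ?thesis
    by (simp add: conj_assoc)
qed

lemma walk_sum_0: "walk_sum 0 j = (if j = 0 then 1 else 0)"
proof -
  have "{s \<in> walks 0. last s = j} = (if j = 0 then {[0]} else {})"
    by (auto simp: walks_0)
  then show ?thesis
    by (simp add: walk_sum_def path_weight_singleton mon_Nil)
qed

lemma walk_sum_parity: "odd (k + j) \<Longrightarrow> walk_sum k j = 0"
  unfolding walk_sum_def by (rule sum.neutral) (auto dest: walks_parity)

lemma walks_Suc_ending_at:
  assumes "j \<le> 3"
  shows "{s \<in> walks (Suc k). last s = j} = (\<lambda>s. s @ [j]) `
    ({s \<in> walks k. last s = j - 1 \<and> 0 < j} \<union> {s \<in> walks k. last s = Suc j \<and> j < 3})"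
proof (intro set_eqI iffI)
  fix s
  assume "s \<in> {s \<in> walks (Suc k). last s = j}"
  then obtain s' where "s = s' @ [j]" "s' \<in> walks k" "j = Suc (last s') \<or> Suc j = last s'"
    by (auto simp: walks_Suc)
  moreover from this have "last s' \<le> 3"
    by (blast intro: last_walk_le_3)
  ultimately show "s \<in> (\<lambda>s. s @ [j]) `
    ({s \<in> walks k. last s = j - 1 \<and> 0 < j} \<union> {s \<in> walks k. last s = Suc j \<and> j < 3})"
    by auto
qed (use assms in \<open>auto simp: walks_Suc\<close>)

lemma walk_sum_Suc:
  assumes "j \<le> 3"
  shows "walk_sum (Suc k) j = (if 0 < j then walk_sum k (j - 1) else 0)
    + (if j < 3 then walk_sum k (Suc j) * Y (Suc j) else 0)"
proof -
  define up where "up = {s \<in> walks k. last s = j - 1 \<and> 0 < j}"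
  define down where "down = {s \<in> walks k. last s = Suc j \<and> j < 3}"
  let ?f = "\<lambda>s. mon (path_weight s)"
  have "inj_on (\<lambda>s. s @ [j]) (up \<union> down)" "finite up" "finite down" "up \<inter> down = {}"
    using finite_walks by (auto simp: inj_on_def up_def down_def)
  then have "walk_sum (Suc k) j = (\<Sum>s \<in> up. ?f (s @ [j])) + (\<Sum>s \<in> down. ?f (s @ [j]))"
    unfolding walk_sum_def walks_Suc_ending_at[OF assms] up_def[symmetric] down_def[symmetric]
    by (simp add: sum.reindex sum.union_disjoint)
  also have "(\<Sum>s \<in> up. ?f (s @ [j])) = (if 0 < j then walk_sum k (j - 1) else 0)"
  proof (cases "0 < j")
    case True
    have "?f (s @ [j]) = ?f s" if "s \<in> up" for s
      using that True walks_nonempty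
      by (auto simp: up_def path_weight_snoc step_wt_def gmul_Nil_right)
    with True show ?thesis
      by (simp add: walk_sum_def up_def)
  qed (simp add: up_def)
  also have "(\<Sum>s \<in> down. ?f (s @ [j])) = (if j < 3 then walk_sum k (Suc j) * Y (Suc j) else 0)"
  proof (cases "j < 3")
    case True
    have "?f (s @ [j]) = ?f s * Y (Suc j)" if "s \<in> down" for s
      using that walks_nonempty
      by (auto simp: down_def path_weight_snoc step_wt_def Y_def mon_def mult_single fg_of_gmul)
    with True show ?thesis
      by (simp add: walk_sum_def down_def sum_distrib_right)
  qed (simp add: down_def)
  finally show ?thesis .
qed

lemma walk_sum_even_0:
  "walk_sum (2 * Suc n) 0 = (walk_sum (2 * n) 0 + walk_sum (2 * n) 2 * Y 2) * Y 1"
  and walk_sum_even_2: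
  "walk_sum (2 * Suc n) 2 = walk_sum (2 * n) 0 + walk_sum (2 * n) 2 * (Y 2 + Y 3)"
proof -
  have odd_1: "walk_sum (Suc (2 * n)) 1 = walk_sum (2 * n) 0 + walk_sum (2 * n) 2 * Y 2"
    using walk_sum_Suc[of 1 "2 * n"] walk_sum_parity[of "2 * n" 1] by (simp add: numeral_2_eq_2)
  have odd_3: "walk_sum (Suc (2 * n)) 3 = walk_sum (2 * n) 2"
    using walk_sum_Suc[of 3 "2 * n"] by (simp add: numeral_3_eq_3 numeral_2_eq_2)
  show "walk_sum (2 * Suc n) 0 = (walk_sum (2 * n) 0 + walk_sum (2 * n) 2 * Y 2) * Y 1"
    using walk_sum_Suc[of 0 "Suc (2 * n)"] odd_1 by simp
  show "walk_sum (2 * Suc n) 2 = walk_sum (2 * n) 0 + walk_sum (2 * n) 2 * (Y 2 + Y 3)"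
    using walk_sum_Suc[of 2 "Suc (2 * n)"] odd_1 odd_3
    by (simp add: numeral_2_eq_2 numeral_3_eq_3 distrib_left add.assoc)
qed

lemma transfer_lin_rec:
  fixes a b :: "nat \<Rightarrow> 'a::ring_1"
  assumes a_Suc: "\<And>n. a (Suc n) = (a n + b n * y2) * y1"
    and b_Suc: "\<And>n. b (Suc n) = a n + b n * (y2 + y3)"
    and inv: "y2 * y1 * u = 1"
    and id_p: "y1 * r + u * (y2 + y3) * y2 * y1 * r = r * p"
    and id_q: "y2 * y1 * r - y1 * u * (y2 + y3) * y2 * y1 * r = - (r * q)"
  shows "a (Suc (Suc n)) * r = a (Suc n) * r * p - a n * r * q"
proof -
  let ?T = "(y2 + y3) * y2 * y1 * r"
  have "b n = b n * (y2 * y1 * u)"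
    by (simp add: inv)
  also have "\<dots> = (a (Suc n) - a n * y1) * u"
    using a_Suc[of n] by (simp add: algebra_simps)
  finally have b: "b n = (a (Suc n) - a n * y1) * u" .
  have "a (Suc (Suc n)) * r = a (Suc n) * y1 * r + a n * y2 * y1 * r + b n * ?T"
    using a_Suc[of "Suc n"] b_Suc[of n] by (simp add: algebra_simps)
  also have "\<dots> = a (Suc n) * (y1 * r + u * ?T) + a n * (y2 * y1 * r - y1 * u * ?T)"
    unfolding b by (simp add: algebra_simps)
  also have "\<dots> = a (Suc n) * r * p - a n * r * q"
    using id_p id_q by (simp add: mult.assoc)
  finally show ?thesis .
qed

lemma Rseq_of_nat: "Rseq (int n) = walk_sum (2 * n) 0 * Rseq 0"
proof -
  let ?U = "mon [ly, lx, lY, lx]"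
  have inv: "Y 2 * Y 1 * ?U = 1"
    and id_A: "Y 1 * Rseq 0 + ?U * (Y 2 + Y 3) * Y 2 * Y 1 * Rseq 0 = Rseq 0 * A"
    and id_C: "Y 2 * Y 1 * Rseq 0 - Y 1 * ?U * (Y 2 + Y 3) * Y 2 * Y 1 * Rseq 0 = - (Rseq 0 * C_inv)"
    and start: "Y 1 * Rseq 0 = Rseq 1"
    unfolding Y_def Rseq_0 Rseq_1 down_wt_eq
    by (simp only: gring_eval, rule terms_eqI, simp add: word_eval)+
  have "Rseq (int n) = walk_sum (2 * n) 0 * Rseq 0 \<and> Rseq (int n + 1) = walk_sum (2 * Suc n) 0 * Rseq 0"
  proof (induction n)
    case 0
    show ?case
      using start walk_sum_even_0[of 0] by (simp add: walk_sum_0)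
  next
    case (Suc n)
    have "walk_sum (2 * Suc (Suc n)) 0 * Rseq 0
        = walk_sum (2 * Suc n) 0 * Rseq 0 * A - walk_sum (2 * n) 0 * Rseq 0 * C_inv"
      by (rule transfer_lin_rec[where a = "\<lambda>n. walk_sum (2 * n) 0" and b = "\<lambda>n. walk_sum (2 * n) 2",
            OF walk_sum_even_0 walk_sum_even_2 inv id_A id_C])
    moreover have "Rseq (int n + 2) = Rseq (int n + 1) * A - Rseq (int n) * C_inv"
      using lin_rec_Rseq by (simp add: lin_rec_def)
    ultimately show ?case
      using Suc.IH by (simp add: add.commute)
  qed
  then show ?thesis ..
qed

section \<open>Walks are determined by their weights\<close>

text \<open>The label \<open>i\<close> of the last down-step \<open>y\<^sub>i\<close> of a walk can be read off the end of its
  reduced weight: \<open>y\<^sub>3 = x y\<^sup>-\<^sup>1\<close> and \<open>y\<^sub>2 = x\<^sup>-\<^sup>1 y\<^sup>-\<^sup>1\<close> are appended without cancellation,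
  while \<open>y\<^sub>1 = y\<^sup>2 x\<^sup>-\<^sup>1 y\<^sup>-\<^sup>1\<close> cancels against the final \<open>y\<^sup>-\<^sup>1\<close> and leaves \<open>\<dots> y x\<^sup>-\<^sup>1 y\<^sup>-\<^sup>1\<close>.\<close>

definition down_shaped :: "word \<Rightarrow> bool" where
  "down_shaped w \<longleftrightarrow> w = [] \<or> (\<exists>p e. w = p @ [(False, e), lY])"

definition last_down :: "word \<Rightarrow> nat" where
  "last_down w = (case rev w of
      _ # b # r \<Rightarrow> if b = lx then 3 else (case r of c # _ \<Rightarrow> if c = ly then 1 else 2 | [] \<Rightarrow> 2)
    | _ \<Rightarrow> 0)"

lemma gmul_down_wt:
  assumes "down_shaped w" "reduced w" "i \<in> {1, 2, 3}"
  shows "down_shaped (gmul w (down_wt i)) \<and> last_down (gmul w (down_wt i)) = i"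
proof (cases "w = []")
  case True
  from assms(3) consider "i = 1" | "i = 2" | "i = 3"
    by blast
  then show ?thesis
    using True by cases (auto simp: down_wt_def words_eq word_eval down_shaped_def last_down_def)
next
  case False
  with assms(1) obtain p e where w: "w = p @ [(False, e), lY]"
    by (auto simp: down_shaped_def)
  with assms(2) have p: "reduced p" "p = [] \<or> (False, e) \<noteq> inv_letter (last p)"
    by (auto simp: reduced_append)
  show ?thesis
  proof (cases "i = 1")
    case True
    have "reduce ([(False, e), lY] @ down_wt 1) = [(False, e), ly, lX, lY]"
      by (cases e) (simp_all add: down_wt_def words_eq word_eval)
    moreover have "reduced (p @ [(False, e), ly, lX, lY])"
      using p by (auto simp: reduced_append inv_letter_def)
    ultimately have "gmul w (down_wt i) = p @ [(False, e), ly, lX, lY]"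
      using True w
      by (metis gmul_def reduce_append reduce_append_reduce_right reduce_reduced append_assoc)
    with True show ?thesis
      by (auto simp: down_shaped_def last_down_def)
  next
    case False
    with assms(3) have i: "i = 2 \<or> i = 3"
      by auto
    with assms(2) w have "reduced (w @ down_wt i)"
      by (auto simp: reduced_append down_wt_def words_eq inv_letter_def)
    then have "gmul w (down_wt i) = w @ down_wt i"
      by (simp add: gmul_def reduce_reduced)
    with i w show ?thesis
      by (auto simp: down_wt_def words_eq down_shaped_def last_down_def)
  qed
qed

lemma walk_weight_shape:
  "s \<in> walks k \<Longrightarrow> down_shaped (path_weight s) \<and> last_down (path_weight s) \<le> Suc (last s)"
proof (induction k arbitrary: s)
  case 0
  then show ?case
    by (simp add: walks_0 path_weight_singleton down_shaped_def last_down_def)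
next
  case (Suc k)
  then obtain s' j where s: "s = s' @ [j]" "s' \<in> walks k" "j = Suc (last s') \<or> Suc j = last s'"
    by (auto simp: walks_Suc)
  then have weight: "path_weight s = gmul (path_weight s') (step_wt (last s') j)"
    using walks_nonempty by (simp add: path_weight_snoc)
  show ?case
  proof (cases "j = Suc (last s')")
    case True
    with weight have "path_weight s = path_weight s'"
      by (simp add: step_wt_def gmul_Nil_right)
    with Suc.IH[OF s(2)] s(1) True show ?thesis
      by simp
  next
    case False
    with s have "last s' = Suc j" "Suc j \<in> {1, 2, 3}"
      using last_walk_le_3 by fastforce+
    with Suc.IH s weight show ?thesis
      using gmul_down_wt[of "path_weight s'" "Suc j"] by (simp add: step_wt_def)
  qed
qed

lemma last_down_step_up:
  "s \<in> walks k \<Longrightarrow> last_down (path_weight (s @ [Suc (last s)])) \<le> Suc (last s)"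
  using walk_weight_shape walks_nonempty
  by (simp add: path_weight_snoc step_wt_def gmul_Nil_right)

lemma last_down_step_down:
  assumes "s \<in> walks k" "last s = Suc j"
  shows "last_down (path_weight (s @ [j])) = Suc j"
proof -
  have "Suc j \<in> {1, 2, 3}"
    using assms last_walk_le_3 by fastforce
  then show ?thesis
    using assms walk_weight_shape[OF assms(1)] walks_nonempty gmul_down_wt[of "path_weight s" "Suc j"]
    by (simp add: path_weight_snoc step_wt_def)
qed

lemma last_before_last_step:
  assumes "s \<in> walks k" "j = Suc (last s) \<or> Suc j = last s"
  shows "last s = (if last_down (path_weight (s @ [j])) \<le> j then j - 1 else Suc j)"
  using assms last_down_step_up[OF assms(1)] last_down_step_down[OF assms(1)] by auto

lemma walk_eq_if_path_weight_eq:
  "s \<in> walks k \<Longrightarrow> t \<in> walks k \<Longrightarrow> last s = last t \<Longrightarrow> path_weight s = path_weight t \<Longrightarrow> s = t"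
proof (induction k arbitrary: s t)
  case 0
  then show ?case
    by (simp add: walks_0)
next
  case (Suc k)
  obtain s' t' j where s: "s = s' @ [j]" "s' \<in> walks k" "j = Suc (last s') \<or> Suc j = last s'"
    and t: "t = t' @ [j]" "t' \<in> walks k" "j = Suc (last t') \<or> Suc j = last t'"
    using Suc.prems(1-3) by (auto simp: walks_Suc)
  have "last s' = last t'"
    using last_before_last_step[OF s(2,3)] last_before_last_step[OF t(2,3)] Suc.prems(4) s(1) t(1)
    by simp
  moreover have "gmul (path_weight s') (step_wt (last s') j) = gmul (path_weight t') (step_wt (last t') j)"
    using Suc.prems(4) s t walks_nonempty by (simp add: path_weight_snoc)
  ultimately have "path_weight s' = path_weight t'"
    by (auto intro: gmul_right_cancel)
  with Suc.IH s t \<open>last s' = last t'\<close> show ?case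
    by simp
qed

lemma card_walks_with_weight_le_1: "card {s \<in> walks k. last s = j \<and> path_weight s = w} \<le> 1"
  using finite_walks walk_eq_if_path_weight_eq by (auto simp: card_le_Suc0_iff_eq)

lemma lookup_walk_sum_01: "Poly_Mapping.lookup (walk_sum k j) g \<in> {0, 1}"
  using card_walks_with_weight_le_1[of k j "word_of g"] by (auto simp: lookup_walk_sum le_Suc_eq)

lemma Rseq_mult_R0_inv: "Rseq (int n) * mon [ly, lX, lY] = walk_sum (2 * n) 0"
proof -
  have "Rseq 0 * mon [ly, lX, lY] = 1"
    unfolding Rseq_0 by (simp only: gring_eval, rule terms_eqI, simp add: word_eval)
  then show ?thesis
    by (simp add: Rseq_of_nat mult.assoc)
qed

lemma lookup_Rseq: "Poly_Mapping.lookup (Rseq z) g \<in> {0, 1}"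
proof -
  have nat_case: "Poly_Mapping.lookup (Rseq (int n)) h \<in> {0, 1}" for n h
    using lookup_walk_sum_01 by (simp add: Rseq_of_nat Rseq_0 mon_def lookup_mult_single)
  show ?thesis
  proof (cases "0 \<le> z")
    case True
    then show ?thesis
      using nat_case by (metis nonneg_int_cases)
  next
    case False
    define n where "n = nat (1 - z)"
    with False have "int n = 1 - z"
      by simp
    then have "Rseq z = reflect (Rseq (int n))"
      using Rseq_reflect[of z] by simp
    then show ?thesis
      using nat_case[of n "anti g"] by (simp add: lookup_reflect)
  qed
qed

theorem theorem3p7:
  shows "\<exists>R :: int \<Rightarrow> lpoly.
           R 0 = lmono R0_word \<and> R 1 = lmono yw \<and>
           (\<forall>n. is_laurent (R n)) \<and>
           (\<forall>n. lmul (lmul (R (n + 1)) (lmono C_word)) (R (n - 1)) = ladd (lmul (R n) (R n)) lone) \<and>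
           (\<forall>n w. R n w \<in> {0, 1}) \<and>
           (\<forall>n \<ge> 0. \<forall>w. lmul (R n) (lmono (ginv R0_word)) w \<noteq> 0 \<longrightarrow>
               card {s \<in> paths (nat n). path_weight s = w} = 1)"
proof (intro exI[of _ "\<lambda>z. lpoly_of (Rseq z)"] conjI allI impI)
  show "lpoly_of (Rseq 0) = lmono R0_word" "lpoly_of (Rseq 1) = lmono yw"
    by (simp_all add: Rseq_0 Rseq_1 lpoly_of_mon words_eq)
  fix n :: int
  show "is_laurent (lpoly_of (Rseq n))"
    by (rule is_laurent_lpoly_of)
  show "lmul (lmul (lpoly_of (Rseq (n + 1))) (lmono C_word)) (lpoly_of (Rseq (n - 1)))
      = ladd (lmul (lpoly_of (Rseq n)) (lpoly_of (Rseq n))) lone"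
    by (simp add: words_eq lmul_lpoly_of Rseq_frieze flip: lpoly_of_mon C_def lpoly_of_one lpoly_of_add)
  fix w
  show "lpoly_of (Rseq n) w \<in> {0, 1}"
    using lookup_Rseq by (simp add: lpoly_of_def)
  assume "0 \<le> n" and nonzero: "lmul (lpoly_of (Rseq n)) (lmono (ginv R0_word)) w \<noteq> 0"
  then have "lmul (lpoly_of (Rseq n)) (lmono (ginv R0_word)) = lpoly_of (walk_sum (2 * nat n) 0)"
    using Rseq_mult_R0_inv[of "nat n"] by (simp add: words_eq(4) lmul_lpoly_of flip: lpoly_of_mon)
  with nonzero have "reduced w" "Poly_Mapping.lookup (walk_sum (2 * nat n) 0) (fg_of w) \<noteq> 0"
    by (auto simp: lpoly_of_def split: if_splits)
  then show "card {s \<in> paths (nat n). path_weight s = w} = 1"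
    using card_walks_with_weight_le_1[of "2 * nat n" 0 w]
    by (simp add: lookup_walk_sum paths_eq_walks word_of_fg_of conj_assoc)
qed

end
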